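(* Let $(A,B,R)$ be a normalized formal context and $(X,Y)\in\mathcal{C}_N$ with $X\neq\varnothing$ and $X\neq B$. If $X^{\uparrow}\neq\varnothing$, then $\langle X,X^{\uparrow}\rangle$ is a coatom of the concept lattice $\mathcal{C}(A,B,R)$, i.e. there is no formal concept $\langle X_0,Y_0\rangle$ with $X\subsetneq X_0\subsetneq B$.
   Context: A formal context is a triple $(A,B,R)$ with $R\subseteq A\times B$. Derivation operators: $X^{\uparrow}=\{a\in A\mid (a,b)\in R \text{ for all } b\in X\}$ for $X\subseteq B$ and $Y^{\downarrow}=\{b\in B\mid (a,b)\in R \text{ for all } a\in Y\}$ for $Y\subseteq A$; a formal concept is a pair $\langle X,Y\rangle$ with $X^\uparrow=Y$, $Y^\downarrow=X$, and $\mathcal{C}(A,B,R)$ is the set of formal concepts ordered by inclusion of extents, whose top element is $\langle B,\varnothing\rangle$ for a normalized context. A coatom is an element covered by the top element. Necessity operators: $X^{\uparrow_N}=\{a\in A\mid \text{for all } b\in B,\ (a,b)\in R\Rightarrow b\in X\}$ and $Y^{\downarrow^N}=\{b\in B\mid \text{for all } a\in A,\ (a,b)\in R\Rightarrow a\in Y\}$. $\mathcal{C}_N=\{(X,Y)\mid X\subseteq B,\ Y\subseteq A,\ X^{\uparrow_N}=Y,\ Y^{\downarrow^N}=X\}$. The context is normalized if for every $a\in A$ there are $b,b'\in B$ with $(a,b)\in R$, $(a,b')\notin R$, and for every $b\in B$ there are $a,a'\in A$ with $(a,b)\in R$, $(a',b)\notin R$. *)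

theory Defs
  imports Main
begin

text \<open>Formal context (A,B,R) with R a subset of A x B. Extents are subsets of B.\<close>

definition up :: "'a set \<Rightarrow> 'b set \<Rightarrow> ('a \<times> 'b) set \<Rightarrow> 'b set \<Rightarrow> 'a set" where
  "up A B R X = {a \<in> A. \<forall>b\<in>X. (a, b) \<in> R}"

definition down :: "'a set \<Rightarrow> 'b set \<Rightarrow> ('a \<times> 'b) set \<Rightarrow> 'a set \<Rightarrow> 'b set" where
  "down A B R Y = {b \<in> B. \<forall>a\<in>Y. (a, b) \<in> R}"

definition upN :: "'a set \<Rightarrow> 'b set \<Rightarrow> ('a \<times> 'b) set \<Rightarrow> 'b set \<Rightarrow> 'a set" where
  "upN A B R X = {a \<in> A. \<forall>b\<in>B. (a, b) \<in> R \<longrightarrow> b \<in> X}"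

definition downN :: "'a set \<Rightarrow> 'b set \<Rightarrow> ('a \<times> 'b) set \<Rightarrow> 'a set \<Rightarrow> 'b set" where
  "downN A B R Y = {b \<in> B. \<forall>a\<in>A. (a, b) \<in> R \<longrightarrow> a \<in> Y}"

definition formal_concept :: "'a set \<Rightarrow> 'b set \<Rightarrow> ('a \<times> 'b) set \<Rightarrow> 'b set \<Rightarrow> 'a set \<Rightarrow> bool" where
  "formal_concept A B R X Y \<longleftrightarrow> X \<subseteq> B \<and> Y \<subseteq> A \<and> up A B R X = Y \<and> down A B R Y = X"

definition CN :: "'a set \<Rightarrow> 'b set \<Rightarrow> ('a \<times> 'b) set \<Rightarrow> ('b set \<times> 'a set) set" where
  "CN A B R = {(X, Y). X \<subseteq> B \<and> Y \<subseteq> A \<and> upN A B R X = Y \<and> downN A B R Y = X}"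

definition normalized :: "'a set \<Rightarrow> 'b set \<Rightarrow> ('a \<times> 'b) set \<Rightarrow> bool" where
  "normalized A B R \<longleftrightarrow> R \<subseteq> A \<times> B \<and>
     (\<forall>a\<in>A. \<exists>b\<in>B. \<exists>b'\<in>B. (a, b) \<in> R \<and> (a, b') \<notin> R) \<and>
     (\<forall>b\<in>B. \<exists>a\<in>A. \<exists>a'\<in>A. (a, b) \<in> R \<and> (a', b) \<notin> R)"

text \<open>Concepts ordered by inclusion of extents; for a normalized context the top is (B, {}).
  A coatom is a concept covered by the top element.\<close>

definition coatom :: "'a set \<Rightarrow> 'b set \<Rightarrow> ('a \<times> 'b) set \<Rightarrow> 'b set \<Rightarrow> 'a set \<Rightarrow> bool" where
  "coatom A B R X Y \<longleftrightarrow> formal_concept A B R X Y \<and> X \<subset> B \<and>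
     \<not> (\<exists>X0 Y0. formal_concept A B R X0 Y0 \<and> X \<subset> X0 \<and> X0 \<subset> B)"

end

theory Submission
  imports Defs
begin

text \<open>Every \<open>a \<in> X\<^sup>\<up>\<close> is related to some
  \<open>b \<in> X = Y\<^sup>\<down>\<^sup>N\<close>, hence \<open>a \<in> Y = X\<^sup>\<up>\<^sub>N\<close>, so the row \<open>R `` {a}\<close> of \<open>a\<close> is exactly \<open>X\<close>.
  One such row shows that \<open>X\<close> is an extent. If \<open>X\<^sub>0 \<supset> X\<close> is an extent, every \<open>a\<close> in its
  intent lies in \<open>X\<^sup>\<up>\<close> and has \<open>X\<^sub>0 \<subseteq> R `` {a} = X\<close>, which is impossible; so the intent of
  \<open>X\<^sub>0\<close> is empty and \<open>X\<^sub>0 = B\<close>.\<close>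

lemma up_antimono: "X \<subseteq> X' \<Longrightarrow> up A B R X' \<subseteq> up A B R X"
  unfolding up_def by blast

lemma down_empty: "down A B R {} = B"
  unfolding down_def by blast

lemma CN_object_in_intent:
  assumes "(X, Y) \<in> CN A B R" "b \<in> X" "a \<in> A" "(a, b) \<in> R"
  shows "a \<in> Y"
proof -
  have "b \<in> downN A B R Y" using assms(1,2) unfolding CN_def by auto
  then show ?thesis using assms(3,4) unfolding downN_def by blast
qed

lemma CN_attribute_in_extent:
  assumes "R \<subseteq> A \<times> B" "(X, Y) \<in> CN A B R" "a \<in> Y" "(a, b) \<in> R"
  shows "b \<in> X"
proof -
  have "a \<in> upN A B R X" using assms(2,3) unfolding CN_def by auto
  then show ?thesis using assms(1,4) unfolding upN_def by blast
qed

lemma CN_extent_eq_row: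
  assumes "R \<subseteq> A \<times> B" "(X, Y) \<in> CN A B R" "X \<noteq> {}" "a \<in> up A B R X"
  shows "X = R `` {a}"
proof
  show "X \<subseteq> R `` {a}" using assms(4) unfolding up_def by blast
  obtain b where "b \<in> X" using assms(3) by blast
  with assms(4) have "a \<in> A" "(a, b) \<in> R" unfolding up_def by auto
  with \<open>b \<in> X\<close> have "a \<in> Y" using CN_object_in_intent[OF assms(2)] by blast
  then show "R `` {a} \<subseteq> X" using CN_attribute_in_extent[OF assms(1,2)] by blast
qed

lemma formal_concept_row:
  assumes "R \<subseteq> A \<times> B" "a \<in> A"
  shows "formal_concept A B R (R `` {a}) (up A B R (R `` {a}))"
  unfolding formal_concept_def
proof (intro conjI)
  show "R `` {a} \<subseteq> B" using assms(1) by blast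
  show "up A B R (R `` {a}) \<subseteq> A" unfolding up_def by blast
  have "a \<in> up A B R (R `` {a})" using assms(2) unfolding up_def by blast
  then show "down A B R (up A B R (R `` {a})) = R `` {a}"
    using assms(1) unfolding down_def up_def by blast
qed simp

lemma formal_concept_extent_subset_row:
  "formal_concept A B R X Y \<Longrightarrow> a \<in> Y \<Longrightarrow> X \<subseteq> R `` {a}"
  unfolding formal_concept_def up_def by blast

lemma formal_concept_above_rows_eq_B:
  assumes concept: "formal_concept A B R X0 Y0" and "X \<subset> X0"
    and rows: "\<And>a. a \<in> up A B R X \<Longrightarrow> R `` {a} = X"
  shows "X0 = B"
proof -
  have "Y0 = {}"
  proof (rule ccontr)
    assume "Y0 \<noteq> {}"
    then obtain a where "a \<in> Y0" by blast
    have "Y0 = up A B R X0" using concept unfolding formal_concept_def by simp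
    also have "\<dots> \<subseteq> up A B R X" using \<open>X \<subset> X0\<close> by (intro up_antimono) blast
    finally have "R `` {a} = X" using rows \<open>a \<in> Y0\<close> by blast
    moreover have "X0 \<subseteq> R `` {a}"
      using formal_concept_extent_subset_row[OF concept \<open>a \<in> Y0\<close>] .
    ultimately show False using \<open>X \<subset> X0\<close> by blast
  qed
  then have "X0 = down A B R {}" using concept unfolding formal_concept_def by simp
  then show ?thesis by (simp add: down_empty)
qed

theorem mainTheorem6:
  fixes A :: "'a set" and B :: "'b set" and R :: "('a \<times> 'b) set"
  assumes "normalized A B R"
    and "(X, Y) \<in> CN A B R"
    and "X \<noteq> {}" and "X \<noteq> B"
    and "up A B R X \<noteq> {}"
  shows "coatom A B R X (up A B R X)"
proof -
  have "R \<subseteq> A \<times> B" using assms(1) unfolding normalized_def by blast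
  note rows = CN_extent_eq_row[OF this assms(2,3)]
  obtain a0 where a0: "a0 \<in> up A B R X" using assms(5) by blast
  then have "a0 \<in> A" unfolding up_def by blast
  with \<open>R \<subseteq> A \<times> B\<close> have "formal_concept A B R X (up A B R X)"
    using formal_concept_row rows[OF a0] by metis
  moreover have "X \<subset> B" using assms(2,4) unfolding CN_def by auto
  ultimately show ?thesis
    unfolding coatom_def using formal_concept_above_rows_eq_B[where X = X] rows by blast
qed

end
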